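(* Let $N\ge 2$ and let $y_1,\dots,y_N$, $r_1,\dots,r_N$ be arbitrary real constants. For each integer $j$ let $\bm{x}_j$ be the $N$-dimensional column vector $\bm{x}_j=(|y_1+jr_1|,\,|y_2+jr_2|,\,\dots,\,|y_N+jr_N|)^T$. For a set $J=\{j_1<j_2<\dots<j_N\}$ of $N$ integers write $U(J)=\max[\bm{x}_{j_1}\ \bm{x}_{j_2}\ \dots\ \bm{x}_{j_N}]$ (ultradiscrete permanent). Then for all integers $1\le k_1<k_2<k_3\le N+1$, \[ U(\{1,\dots,N+1\}\setminus\{k_2\})+U(\{1,\dots,N+2\}\setminus\{k_1,k_3\}) \] \[ =\max\Bigl(U(\{1,\dots,N+1\}\setminus\{k_3\})+U(\{1,\dots,N+2\}\setminus\{k_1,k_2\}),\ U(\{1,\dots,N+1\}\setminus\{k_1\})+U(\{1,\dots,N+2\}\setminus\{k_2,k_3\})\Bigr). \]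
   Context: Ultradiscrete permanent (UP): for a real $N\times N$ matrix $A=(a_{ij})$, $\max A=\max[a_{ij}]_{1\le i,j\le N}\equiv\max_{\pi}\sum_{i=1}^N a_{i\pi(i)}$, the maximum over all permutations $\pi$ of $\{1,\dots,N\}$. For column vectors $\bm{b}_1,\dots,\bm{b}_N\in\mathbb{R}^N$, $\max[\bm{b}_1\ \dots\ \bm{b}_N]$ is the UP of the matrix with these columns. *)

theory Defs
  imports Complex_Main "HOL-Combinatorics.Permutations"
begin

definition UP :: "nat \<Rightarrow> (nat \<Rightarrow> nat \<Rightarrow> real) \<Rightarrow> real" where
  "UP N a = Max {(\<Sum>i<N. a i (\<pi> i)) | \<pi>. \<pi> permutes {..<N}}"

text \<open>x_j = (|y_1 + j r_1|, ..., |y_N + j r_N|)^T; row i (0-based) corresponds to index i+1.\<close>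
definition xvec :: "(nat \<Rightarrow> real) \<Rightarrow> (nat \<Rightarrow> real) \<Rightarrow> int \<Rightarrow> nat \<Rightarrow> real" where
  "xvec y r j i = \<bar>y i + of_int j * r i\<bar>"

definition Uset :: "nat \<Rightarrow> (nat \<Rightarrow> real) \<Rightarrow> (nat \<Rightarrow> real) \<Rightarrow> int set \<Rightarrow> real" where
  "Uset N y r J = UP N (\<lambda>i c. xvec y r (sorted_list_of_set J ! c) i)"

end

theory Submission
  imports Defs
begin

text \<open>
  \<open>U(X) + U(Y)\<close> is the largest weight of a pair \<open>(p, q)\<close> of bijections from the rows onto
  \<open>X\<close> and onto \<open>Y\<close>. Read such a pair as a map from \<open>X\<close> to \<open>Y\<close>, sending the
  \<open>X\<close>-column of a row to its \<open>Y\<close>-column: every \<open>x \<in> X - Y\<close> starts an alternating path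
  ending at some \<open>e \<in> Y - X\<close>, and exchanging the two columns of every row on the path gives a
  pair for \<open>X - {x} \<union> {e}\<close> and \<open>Y - {e} \<union> {x}\<close> of the same weight. This proves the
  inequality \<open>\<le> max\<close>, for arbitrary matrices. For the two reverse inequalities the path from
  a prescribed start has to end at a prescribed column; when it does not, the two alternating paths
  cross, and exchanging the columns of two suitably chosen rows re-joins them. Since
  \<open>x \<mapsto> |y\<^sub>i + x r\<^sub>i| - |y\<^sub>j + x r\<^sub>j|\<close> is quasi-convex or quasi-concave,
  one of the available exchanges does not decrease the weight.
\<close>

lemma permutation_sums_eq_bij_sums:
  fixes J :: "'a::linorder set" and w :: "nat \<Rightarrow> 'a \<Rightarrow> real"
  assumes "finite J" "card J = N"
  shows "{\<Sum>i<N. w i (sorted_list_of_set J ! \<pi> i) | \<pi>. \<pi> permutes {..<N}}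
       = {\<Sum>i<N. w i (f i) | f. bij_betw f {..<N} J}"
proof -
  let ?e = "(!) (sorted_list_of_set J)"
  have e: "bij_betw ?e {..<N} J"
    using assms by (intro bij_betw_nth) auto
  have perm: "\<exists>\<pi>. \<pi> permutes {..<N} \<and> (\<forall>i<N. ?e (\<pi> i) = f i)"
    if f: "bij_betw f {..<N} J" for f
  proof -
    define \<pi> where "\<pi> i = (if i < N then inv_into {..<N} ?e (f i) else i)" for i
    have "bij_betw (inv_into {..<N} ?e \<circ> f) {..<N} {..<N}"
      using f bij_betw_inv_into[OF e] by (rule bij_betw_trans)
    then have "bij_betw \<pi> {..<N} {..<N}"
      by (rule bij_betw_cong[THEN iffD1, rotated]) (simp add: \<pi>_def)
    then have "\<pi> permutes {..<N}"
      by (rule bij_imp_permutes) (simp add: \<pi>_def)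
    moreover have "?e (\<pi> i) = f i" if "i < N" for i
      using that f e by (auto simp: \<pi>_def bij_betw_def intro: f_inv_into_f)
    ultimately show ?thesis by blast
  qed
  show ?thesis
  proof (intro set_eqI iffI)
    fix z assume "z \<in> {\<Sum>i<N. w i (?e (\<pi> i)) | \<pi>. \<pi> permutes {..<N}}"
    then obtain \<pi> where \<pi>: "\<pi> permutes {..<N}" and z: "z = (\<Sum>i<N. w i (?e (\<pi> i)))" by blast
    have "bij_betw (?e \<circ> \<pi>) {..<N} J"
      using permutes_imp_bij[OF \<pi>] e by (rule bij_betw_trans)
    then show "z \<in> {\<Sum>i<N. w i (f i) | f. bij_betw f {..<N} J}"
      using z by (auto intro!: exI[of _ "?e \<circ> \<pi>"])
  next
    fix z assume "z \<in> {\<Sum>i<N. w i (f i) | f. bij_betw f {..<N} J}"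
    then obtain f where f: "bij_betw f {..<N} J" and z: "z = (\<Sum>i<N. w i (f i))" by blast
    obtain \<pi> where "\<pi> permutes {..<N}" "\<forall>i<N. ?e (\<pi> i) = f i" using perm[OF f] by blast
    then show "z \<in> {\<Sum>i<N. w i (?e (\<pi> i)) | \<pi>. \<pi> permutes {..<N}}"
      using z by (auto intro!: exI[of _ \<pi>] sum.cong)
  qed
qed

lemma Uset_eq_Max_bij_sums:
  assumes "finite J" "card J = N"
  shows "Uset N y r J = Max {\<Sum>i<N. xvec y r (f i) i | f. bij_betw f {..<N} J}"
  using permutation_sums_eq_bij_sums[OF assms, of "\<lambda>i j. xvec y r j i"]
  by (simp add: Uset_def UP_def)

lemma finite_bij_sums:
  assumes "finite J" "card J = N"
  shows "finite {\<Sum>i<N. xvec y r (f i) i | f. bij_betw f {..<N} J}"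
  using permutation_sums_eq_bij_sums[OF assms, of "\<lambda>i j. xvec y r j i", symmetric]
  by (simp add: finite_permutations)

lemma bij_sum_le_Uset:
  assumes "bij_betw f {..<N} J"
  shows "(\<Sum>i<N. xvec y r (f i) i) \<le> Uset N y r J"
proof -
  have J: "finite J" "card J = N"
    using bij_betw_finite[OF assms] bij_betw_same_card[OF assms] by auto
  show ?thesis
    unfolding Uset_eq_Max_bij_sums[OF J] using finite_bij_sums[OF J] assms by (intro Max_ge) auto
qed

lemma Uset_attained:
  assumes "finite J" "card J = N"
  obtains f where "bij_betw f {..<N} J" "Uset N y r J = (\<Sum>i<N. xvec y r (f i) i)"
proof -
  obtain f where "bij_betw f {..<N} J"
    using assms finite_same_card_bij[of "{..<N}" J] by auto
  then have "{\<Sum>i<N. xvec y r (f i) i | f. bij_betw f {..<N} J} \<noteq> {}" by blast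
  from Max_in[OF finite_bij_sums[OF assms] this] show ?thesis
    using that unfolding Uset_eq_Max_bij_sums[OF assms] by auto
qed

definition pair_weight :: "(nat \<Rightarrow> int \<Rightarrow> real) \<Rightarrow> nat \<Rightarrow> (nat \<Rightarrow> int) \<Rightarrow> (nat \<Rightarrow> int) \<Rightarrow> real" where
  "pair_weight G N p q = (\<Sum>i<N. G i (p i) + G i (q i))"

abbreviation entry :: "(nat \<Rightarrow> real) \<Rightarrow> (nat \<Rightarrow> real) \<Rightarrow> nat \<Rightarrow> int \<Rightarrow> real" where
  "entry y r i c \<equiv> xvec y r c i"

lemma pair_weight_entry:
  "pair_weight (entry y r) N p q = (\<Sum>i<N. xvec y r (p i) i) + (\<Sum>i<N. xvec y r (q i) i)"
  by (simp add: pair_weight_def sum.distrib)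

lemma sum_transpose_arg:
  fixes F :: "'a \<Rightarrow> 'b \<Rightarrow> 'c::ab_group_add"
  assumes "finite A" "i \<in> A" "j \<in> A" "i \<noteq> j"
  shows "(\<Sum>z\<in>A. F z (h (transpose i j z)))
       = (\<Sum>z\<in>A. F z (h z)) + (F i (h j) + F j (h i)) - (F i (h i) + F j (h j))"
proof -
  have split: "sum g A = g i + g j + sum g (A - {i, j})" for g :: "'a \<Rightarrow> 'c"
  proof -
    have "sum g A = g i + sum g (A - {i})" using assms by (intro sum.remove)
    also have "sum g (A - {i}) = g j + sum g (A - {i} - {j})" using assms by (intro sum.remove) auto
    finally show ?thesis by (simp add: Diff_insert2 [symmetric] add.assoc)
  qed
  have "(\<Sum>z\<in>A - {i, j}. F z (h (transpose i j z))) = (\<Sum>z\<in>A - {i, j}. F z (h z))"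
    by (intro sum.cong) auto
  then show ?thesis
    using assms by (simp add: split[of "\<lambda>z. F z (h (transpose i j z))"] split[of "\<lambda>z. F z (h z)"])
qed

lemma pair_weight_transpose:
  assumes "i < N" "j < N" "i \<noteq> j"
  shows "pair_weight G N p (q \<circ> transpose i j)
           = pair_weight G N p q + (G i (q j) + G j (q i)) - (G i (q i) + G j (q j))"
    and "pair_weight G N (p \<circ> transpose i j) q
           = pair_weight G N p q + (G i (p j) + G j (p i)) - (G i (p i) + G j (p j))"
  using sum_transpose_arg[of "{..<N}" i j G] assms by (simp_all add: pair_weight_def sum.distrib)

lemma abs_add_mult_same_sign:
  fixes s d r :: real
  assumes "0 \<le> d" "0 \<le> s * r"
  shows "\<bar>s + d * r\<bar> = \<bar>s\<bar> + d * \<bar>r\<bar>"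
proof -
  have "0 \<le> s * (d * r)" using assms by (metis mult.left_commute mult_nonneg_nonneg)
  then have "0 \<le> s \<and> 0 \<le> d * r \<or> s \<le> 0 \<and> d * r \<le> 0" by (simp add: zero_le_mult_iff)
  then have "\<bar>s + d * r\<bar> = \<bar>s\<bar> + \<bar>d * r\<bar>" by linarith
  then show ?thesis using assms(1) by (simp add: abs_mult)
qed

lemma abs_affine_diff_quasiconvex:
  fixes x1 x2 x3 y1 y2 r1 r2 :: real
  defines "\<phi> \<equiv> \<lambda>x. \<bar>y1 + x * r1\<bar> - \<bar>y2 + x * r2\<bar>"
  assumes "x1 < x2" "x2 < x3" "\<bar>r2\<bar> \<le> \<bar>r1\<bar>"
  shows "\<phi> x2 \<le> max (\<phi> x1) (\<phi> x3)"
proof -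
  have slow: "\<bar>y2 + x * r2\<bar> - \<bar>y2 + x2 * r2\<bar> \<le> \<bar>x - x2\<bar> * \<bar>r1\<bar>" for x
  proof -
    have "(y2 + x * r2) - (y2 + x2 * r2) = (x - x2) * r2" by (simp add: algebra_simps)
    then have "\<bar>y2 + x * r2\<bar> - \<bar>y2 + x2 * r2\<bar> \<le> \<bar>x - x2\<bar> * \<bar>r2\<bar>"
      using abs_triangle_ineq3[of "y2 + x * r2" "y2 + x2 * r2"] by (simp add: abs_mult)
    then show ?thesis using mult_left_mono[OF assms(4), of "\<bar>x - x2\<bar>"] by simp
  qed
  \<comment> \<open>on the side of \<open>x2\<close> where \<open>y1 + x * r1\<close> keeps its sign, the first term grows at rate \<open>|r1|\<close>\<close>
  let ?s = "y1 + x2 * r1"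
  show ?thesis
  proof (cases "0 \<le> ?s * r1")
    case True
    have "\<bar>y1 + x3 * r1\<bar> = \<bar>?s + (x3 - x2) * r1\<bar>" by (rule arg_cong[where f=abs]) algebra
    also have "\<dots> = \<bar>?s\<bar> + (x3 - x2) * \<bar>r1\<bar>"
      by (rule abs_add_mult_same_sign) (use assms(3) True in auto)
    finally have "\<phi> x2 \<le> \<phi> x3"
      using slow[of x3] assms(3) unfolding \<phi>_def by simp
    then show ?thesis by simp
  next
    case False
    have "\<bar>y1 + x1 * r1\<bar> = \<bar>?s + (x2 - x1) * (- r1)\<bar>" by (rule arg_cong[where f=abs]) algebra
    also have "\<dots> = \<bar>?s\<bar> + (x2 - x1) * \<bar>r1\<bar>"
      using abs_add_mult_same_sign[of "x2 - x1" ?s "- r1"] assms(2) False by simp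
    finally have "\<phi> x2 \<le> \<phi> x1"
      using slow[of x1] assms(2) unfolding \<phi>_def by simp
    then show ?thesis by simp
  qed
qed

lemma abs_affine_diff_four_points:
  fixes u v w w' y1 y2 r1 r2 :: real
  defines "\<phi> \<equiv> \<lambda>x. \<bar>y1 + x * r1\<bar> - \<bar>y2 + x * r2\<bar>"
  assumes "u < w" "w < v" "w' < u \<or> v < w'"
  shows "min (\<phi> u) (\<phi> v) \<le> max (\<phi> w) (\<phi> w')"
proof (cases "\<bar>r2\<bar> \<le> \<bar>r1\<bar>")
  case True
  have "\<phi> u \<le> max (\<phi> w') (\<phi> w)" if "w' < u"
    using abs_affine_diff_quasiconvex[OF that assms(2) True] unfolding \<phi>_def .
  moreover have "\<phi> v \<le> max (\<phi> w) (\<phi> w')" if "v < w'"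
    using abs_affine_diff_quasiconvex[OF assms(3) that True] unfolding \<phi>_def .
  ultimately show ?thesis using assms(4) by linarith
next
  case False
  then have "- \<phi> w \<le> max (- \<phi> u) (- \<phi> v)"
    using abs_affine_diff_quasiconvex[OF assms(2,3), of r1 r2 y2 y1] unfolding \<phi>_def by simp
  then show ?thesis by (auto simp: max_def min_def split: if_splits)
qed

lemma bij_betw_piecewise:
  assumes "bij_betw f A C" "bij_betw g A D" "g ` {i \<in> A. P i} \<inter> f ` {i \<in> A. \<not> P i} = {}"
  shows "bij_betw (\<lambda>i. if P i then g i else f i) A (g ` {i \<in> A. P i} \<union> f ` {i \<in> A. \<not> P i})"
proof -
  have "bij_betw (\<lambda>i. if P i then g i else f i) {i \<in> A. P i} (g ` {i \<in> A. P i})"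
    using bij_betw_subset[OF assms(2), of "{i \<in> A. P i}"] by (rule bij_betw_cong[THEN iffD1, rotated]) auto
  moreover have "bij_betw (\<lambda>i. if P i then g i else f i) {i \<in> A. \<not> P i} (f ` {i \<in> A. \<not> P i})"
    using bij_betw_subset[OF assms(1), of "{i \<in> A. \<not> P i}"] by (rule bij_betw_cong[THEN iffD1, rotated]) auto
  ultimately have "bij_betw (\<lambda>i. if P i then g i else f i) ({i \<in> A. P i} \<union> {i \<in> A. \<not> P i})
      (g ` {i \<in> A. P i} \<union> f ` {i \<in> A. \<not> P i})"
    using assms(3) by (rule bij_betw_combine)
  moreover have "{i \<in> A. P i} \<union> {i \<in> A. \<not> P i} = A" by blast
  ultimately show ?thesis by simp
qed

lemma funpow_agree:
  assumes "\<And>i. i < n \<Longrightarrow> g ((f ^^ i) a) = f ((f ^^ i) a)"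
  shows "(g ^^ n) a = (f ^^ n) a"
  using assms by (induction n) auto

lemma exchange_sets:
  assumes "T \<subseteq> X" "x \<in> T" "e \<in> S" "T \<subseteq> S \<union> {x}" "S \<subseteq> T \<union> {e}" "S \<subseteq> Y" "x \<notin> Y" "e \<notin> X"
  shows "S \<inter> (X - T) = {}" "S \<union> (X - T) = X - {x} \<union> {e}"
    and "T \<inter> (Y - S) = {}" "T \<union> (Y - S) = Y - {e} \<union> {x}"
  using assms by blast+

locale assignment_pair =
  fixes N :: nat and p q :: "nat \<Rightarrow> int" and X Y :: "int set"
  assumes bij_p: "bij_betw p {..<N} X" and bij_q: "bij_betw q {..<N} Y"
begin

lemma obtain_row:
  assumes "c \<in> X"
  obtains i where "i < N" "p i = c"
  using assms bij_p by (auto simp: bij_betw_def)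

definition follow :: "int \<Rightarrow> int" where
  "follow c = q (inv_into {..<N} p c)"

lemma follow_p [simp]: "i < N \<Longrightarrow> follow (p i) = q i"
  using bij_p by (simp add: follow_def bij_betw_def)

lemma bij_follow: "bij_betw follow X Y"
proof -
  have "bij_betw (q \<circ> inv_into {..<N} p) X Y"
    using bij_betw_inv_into[OF bij_p] bij_q by (rule bij_betw_trans)
  then show ?thesis by (simp add: follow_def[abs_def] comp_def)
qed

lemma pair_weight_le_Uset: "pair_weight (entry y r) N p q \<le> Uset N y r X + Uset N y r Y"
  using bij_sum_le_Uset[OF bij_p] bij_sum_le_Uset[OF bij_q] by (simp add: pair_weight_entry add_mono)

definition alt_path :: "int \<Rightarrow> nat \<Rightarrow> bool" where
  "alt_path x k \<longleftrightarrow> x \<in> X - Y \<and> (follow ^^ k) x \<in> Y - X \<and> (\<forall>j<k. (follow ^^ j) x \<in> X)"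

lemma funpow_follow_in_Y:
  assumes "\<forall>i<j. (follow ^^ i) x \<in> X" "0 < j"
  shows "(follow ^^ j) x \<in> Y"
proof -
  obtain i where "j = Suc i" using assms(2) by (cases j) auto
  then show ?thesis using assms(1) bij_follow by (auto simp: bij_betw_def)
qed

lemma funpow_follow_cancel:
  assumes "j \<le> j'" "\<forall>i<j. (follow ^^ i) x \<in> X" "\<forall>i<j'. (follow ^^ i) x' \<in> X"
    and "(follow ^^ j) x = (follow ^^ j') x'"
  shows "x = (follow ^^ (j' - j)) x'"
  using assms
proof (induction j arbitrary: j')
  case 0
  then show ?case by simp
next
  case (Suc j)
  then obtain j'' where j': "j' = Suc j''" by (cases j') auto
  have "(follow ^^ j) x = (follow ^^ j'') x'"
    using Suc.prems j' bij_follow by (auto simp: bij_betw_def dest: inj_onD)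
  then show ?case using Suc.IH[of j''] Suc.prems j' by simp
qed

lemma alt_path_pos: "alt_path x k \<Longrightarrow> 0 < k"
  unfolding alt_path_def by (cases k) auto

lemma alt_path_point_in:
  assumes "alt_path x k" "j \<le> k"
  shows "(follow ^^ j) x \<in> X \<union> Y"
  using assms unfolding alt_path_def by (cases "j = k") auto

lemma alt_path_points_eq:
  assumes "alt_path x k" "alt_path x' k'" "j \<le> k" "j' \<le> k'"
    and "(follow ^^ j) x = (follow ^^ j') x'"
  shows "x = x' \<and> j = j'"
proof -
  have *: "x = x' \<and> j = j'"
    if "alt_path x k" "alt_path x' k'" "j \<le> k" "j' \<le> k'" "(follow ^^ j) x = (follow ^^ j') x'" "j \<le> j'"
    for x x' k k' j j'
  proof -
    have X: "\<forall>i<j. (follow ^^ i) x \<in> X" "\<forall>i<j'. (follow ^^ i) x' \<in> X"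
      using that unfolding alt_path_def by auto
    then have x: "x = (follow ^^ (j' - j)) x'"
      using funpow_follow_cancel that(5,6) by blast
    have "j' - j = 0"
    proof (rule ccontr)
      assume "j' - j \<noteq> 0"
      then have "(follow ^^ (j' - j)) x' \<in> Y" using X(2) by (intro funpow_follow_in_Y) auto
      then show False using x that(1) unfolding alt_path_def by auto
    qed
    then show ?thesis using x that(6) by simp
  qed
  show ?thesis
    using *[OF assms] *[OF assms(2,1,4,3) assms(5)[symmetric]] by (cases "j \<le> j'") auto
qed

lemma alt_path_points_ne:
  assumes "alt_path x k" "alt_path x' k'" "j \<le> k" "j' \<le> k'" "x \<noteq> x' \<or> j \<noteq> j'"
  shows "(follow ^^ j) x \<noteq> (follow ^^ j') x'"
  using alt_path_points_eq[OF assms(1-4)] assms(5) by blast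

lemma alt_path_exists:
  assumes "x \<in> X - Y"
  obtains k where "alt_path x k"
proof -
  have "\<exists>j. (follow ^^ j) x \<notin> X"
  proof (rule ccontr)
    assume "\<not> ?thesis"
    then have in_X: "(follow ^^ j) x \<in> X" for j by blast
    have no_return: "(follow ^^ j) x \<noteq> (follow ^^ j') x" if "j < j'" for j j'
    proof
      assume "(follow ^^ j) x = (follow ^^ j') x"
      then have "x = (follow ^^ (j' - j)) x"
        using funpow_follow_cancel in_X that by auto
      moreover have "(follow ^^ (j' - j)) x \<in> Y"
        using in_X that by (intro funpow_follow_in_Y) auto
      ultimately show False using assms by auto
    qed
    have "inj (\<lambda>j. (follow ^^ j) x)"
    proof (rule injI)
      fix j j' assume eq: "(follow ^^ j) x = (follow ^^ j') x"
      show "j = j'"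
      proof (rule ccontr)
        assume "j \<noteq> j'"
        then consider "j < j'" | "j' < j" by arith
        then show False using eq no_return[of j j'] no_return[of j' j] by cases simp_all
      qed
    qed
    moreover have "finite (range (\<lambda>j. (follow ^^ j) x))"
      by (rule finite_subset[of _ X]) (use in_X bij_betw_finite[OF bij_p] in auto)
    ultimately show False
      using finite_imageD infinite_UNIV_nat by blast
  qed
  define k where "k = (LEAST j. (follow ^^ j) x \<notin> X)"
  have k: "(follow ^^ k) x \<notin> X" "\<forall>j<k. (follow ^^ j) x \<in> X"
    unfolding k_def using LeastI_ex[OF \<open>\<exists>j. _\<close>] not_less_Least by auto
  then have "0 < k" using assms by (cases k) auto
  then have "(follow ^^ k) x \<in> Y" using k(2) by (rule funpow_follow_in_Y[rotated])
  then show ?thesis using that k assms unfolding alt_path_def by blast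
qed

definition path_points :: "int \<Rightarrow> nat \<Rightarrow> int set" where
  "path_points x k = (\<lambda>j. (follow ^^ j) x) ` {..<k}"

lemma path_points_subset: "alt_path x k \<Longrightarrow> path_points x k \<subseteq> X"
  unfolding alt_path_def path_points_def by auto

lemma start_in_path_points: "alt_path x k \<Longrightarrow> x \<in> path_points x k"
  using alt_path_pos[of x k] unfolding path_points_def by (auto intro: image_eqI[of _ _ 0])

lemma follow_path_points:
  assumes "alt_path x k"
  shows "follow ` path_points x k \<subseteq> path_points x k \<union> {(follow ^^ k) x}"
    and "path_points x k \<subseteq> follow ` path_points x k \<union> {x}"
    and "(follow ^^ k) x \<in> follow ` path_points x k"
proof -
  show "follow ` path_points x k \<subseteq> path_points x k \<union> {(follow ^^ k) x}"
  proof
    fix z assume "z \<in> follow ` path_points x k"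
    then obtain j where j: "j < k" "z = (follow ^^ Suc j) x" unfolding path_points_def by auto
    show "z \<in> path_points x k \<union> {(follow ^^ k) x}"
    proof (cases "Suc j = k")
      case False
      then have "Suc j < k" using j(1) by simp
      then show ?thesis using j(2) unfolding path_points_def by blast
    qed (use j in simp)
  qed
  show "path_points x k \<subseteq> follow ` path_points x k \<union> {x}"
  proof
    fix z assume "z \<in> path_points x k"
    then obtain j where j: "j < k" "z = (follow ^^ j) x" unfolding path_points_def by auto
    show "z \<in> follow ` path_points x k \<union> {x}"
    proof (cases j)
      case (Suc i)
      then have "z = follow ((follow ^^ i) x)" "i < k" using j by auto
      then show ?thesis unfolding path_points_def by blast
    qed (use j in simp)
  qed
  obtain i where "k = Suc i" using alt_path_pos[OF assms] by (cases k) auto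
  then show "(follow ^^ k) x \<in> follow ` path_points x k"
    unfolding path_points_def by auto
qed

definition switch_p :: "int \<Rightarrow> nat \<Rightarrow> nat \<Rightarrow> int" where
  "switch_p x k i = (if p i \<in> path_points x k then q i else p i)"

definition switch_q :: "int \<Rightarrow> nat \<Rightarrow> nat \<Rightarrow> int" where
  "switch_q x k i = (if p i \<in> path_points x k then p i else q i)"

lemma switch_is_assignment_pair:
  assumes "alt_path x k"
  shows "assignment_pair N (switch_p x k) (switch_q x k)
           (X - {x} \<union> {(follow ^^ k) x}) (Y - {(follow ^^ k) x} \<union> {x})"
proof
  let ?T = "path_points x k" and ?S = "follow ` path_points x k" and ?e = "(follow ^^ k) x"
  let ?R = "{i \<in> {..<N}. p i \<in> ?T}" and ?R' = "{i \<in> {..<N}. p i \<notin> ?T}"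
  have sets: "?T \<subseteq> X" "x \<in> ?T" "?e \<in> ?S" "?T \<subseteq> ?S \<union> {x}" "?S \<subseteq> ?T \<union> {?e}"
    "?S \<subseteq> Y" "x \<notin> Y" "?e \<notin> X"
    using assms path_points_subset start_in_path_points follow_path_points bij_follow
    unfolding alt_path_def by (auto simp: bij_betw_def)
  note exchange = exchange_sets[OF sets]
  have pR: "p ` ?R = ?T" "p ` ?R' = X - ?T"
    using sets(1) bij_p by (auto simp: bij_betw_def)
  have "follow ` p ` ?R = q ` ?R"
    unfolding image_image by (rule image_cong) auto
  then have qR: "q ` ?R = ?S" using pR(1) by simp
  have "q ` ({..<N} - ?R) = q ` {..<N} - q ` ?R"
    by (rule inj_on_image_set_diff[OF bij_betw_imp_inj_on[OF bij_q]]) auto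
  moreover have "?R' = {..<N} - ?R" by auto
  ultimately have "q ` ?R' = q ` {..<N} - q ` ?R" by (simp only:)
  also have "\<dots> = Y - ?S" by (simp only: bij_betw_imp_surj_on[OF bij_q] qR)
  finally have qR': "q ` ?R' = Y - ?S" .
  from exchange(1) have "q ` ?R \<inter> p ` ?R' = {}" by (simp only: pR qR)
  then have "bij_betw (\<lambda>i. if p i \<in> ?T then q i else p i) {..<N} (q ` ?R \<union> p ` ?R')"
    by (rule bij_betw_piecewise[OF bij_p bij_q])
  moreover have "q ` ?R \<union> p ` ?R' = X - {x} \<union> {?e}"
    using exchange(2) by (simp only: pR qR)
  ultimately show "bij_betw (switch_p x k) {..<N} (X - {x} \<union> {?e})"
    by (simp add: switch_p_def[abs_def])
  from exchange(3) have "p ` ?R \<inter> q ` ?R' = {}" by (simp only: pR qR')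
  then have "bij_betw (\<lambda>i. if p i \<in> ?T then p i else q i) {..<N} (p ` ?R \<union> q ` ?R')"
    by (rule bij_betw_piecewise[OF bij_q bij_p])
  moreover have "p ` ?R \<union> q ` ?R' = Y - {?e} \<union> {x}"
    using exchange(4) by (simp only: pR qR')
  ultimately show "bij_betw (switch_q x k) {..<N} (Y - {?e} \<union> {x})"
    by (simp add: switch_q_def[abs_def])
qed

lemma pair_weight_switch: "pair_weight G N (switch_p x k) (switch_q x k) = pair_weight G N p q"
  unfolding pair_weight_def switch_p_def switch_q_def by (intro sum.cong) auto

lemma switch_along_path:
  assumes "alt_path x k"
  obtains p' q' where "assignment_pair N p' q' (X - {x} \<union> {(follow ^^ k) x}) (Y - {(follow ^^ k) x} \<union> {x})"
    and "pair_weight G N p' q' = pair_weight G N p q"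
  using that switch_is_assignment_pair[OF assms] pair_weight_switch .

lemma pair_weight_le_Uset_switch:
  assumes "alt_path x k"
  shows "pair_weight (entry y r) N p q
           \<le> Uset N y r (X - {x} \<union> {(follow ^^ k) x}) + Uset N y r (Y - {(follow ^^ k) x} \<union> {x})"
proof -
  obtain p' q' where "assignment_pair N p' q' (X - {x} \<union> {(follow ^^ k) x}) (Y - {(follow ^^ k) x} \<union> {x})"
    and "pair_weight (entry y r) N p' q' = pair_weight (entry y r) N p q"
    by (rule switch_along_path[OF assms])
  then show ?thesis using assignment_pair.pair_weight_le_Uset by metis
qed

lemma switch_follow_outside:
  assumes "alt_path x k" "c \<in> X - path_points x k"
  shows "assignment_pair.follow N (switch_p x k) (switch_q x k) c = follow c"
proof -
  interpret sw: assignment_pair N "switch_p x k" "switch_q x k"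
      "X - {x} \<union> {(follow ^^ k) x}" "Y - {(follow ^^ k) x} \<union> {x}"
    by (rule switch_is_assignment_pair[OF assms(1)])
  obtain i where i: "i < N" "p i = c" using assms(2) by (auto elim: obtain_row)
  then have "switch_p x k i = c" "switch_q x k i = q i"
    using assms(2) by (auto simp: switch_p_def switch_q_def)
  then show ?thesis using sw.follow_p[OF i(1)] follow_p[OF i(1)] i(2) by simp
qed

lemma switch_follow_inside:
  assumes "alt_path x k" "j < k"
  shows "assignment_pair.follow N (switch_p x k) (switch_q x k) ((follow ^^ Suc j) x) = (follow ^^ j) x"
proof -
  interpret sw: assignment_pair N "switch_p x k" "switch_q x k"
      "X - {x} \<union> {(follow ^^ k) x}" "Y - {(follow ^^ k) x} \<union> {x}"
    by (rule switch_is_assignment_pair[OF assms(1)])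
  have "(follow ^^ j) x \<in> X" using assms unfolding alt_path_def by auto
  then obtain i where i: "i < N" "p i = (follow ^^ j) x" by (rule obtain_row)
  then have "p i \<in> path_points x k" using assms(2) unfolding path_points_def by auto
  moreover have "q i = (follow ^^ Suc j) x" using follow_p[OF i(1)] i(2) by simp
  ultimately have "switch_p x k i = (follow ^^ Suc j) x" "switch_q x k i = (follow ^^ j) x"
    using i(2) by (auto simp: switch_p_def switch_q_def)
  then show ?thesis using sw.follow_p[OF i(1)] by simp
qed

lemma switch_reverses_path:
  assumes "alt_path x k"
  defines "follow' \<equiv> assignment_pair.follow N (switch_p x k) (switch_q x k)"
  shows "\<And>j. j \<le> k \<Longrightarrow> (follow' ^^ j) ((follow ^^ k) x) = (follow ^^ (k - j)) x"
    and "assignment_pair.alt_path N (switch_p x k) (switch_q x k)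
           (X - {x} \<union> {(follow ^^ k) x}) (Y - {(follow ^^ k) x} \<union> {x}) ((follow ^^ k) x) k"
proof -
  interpret sw: assignment_pair N "switch_p x k" "switch_q x k"
      "X - {x} \<union> {(follow ^^ k) x}" "Y - {(follow ^^ k) x} \<union> {x}"
    by (rule switch_is_assignment_pair[OF assms(1)])
  show reversed: "(follow' ^^ j) ((follow ^^ k) x) = (follow ^^ (k - j)) x" if "j \<le> k" for j
    using that
  proof (induction j)
    case (Suc j)
    then have "k - j = Suc (k - Suc j)" by simp
    then show ?case
      using Suc switch_follow_inside[OF assms(1), of "k - Suc j"] by (simp add: follow'_def)
  qed simp
  have ends: "x \<in> X" "x \<notin> Y" "(follow ^^ k) x \<in> Y" "(follow ^^ k) x \<notin> X"
    using assms(1) unfolding alt_path_def by auto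
  have "(follow ^^ (k - j)) x \<in> X - {x} \<union> {(follow ^^ k) x}" if "j < k" for j
  proof (cases "j = 0")
    case False
    then have "(follow ^^ (k - j)) x \<noteq> x"
      using alt_path_points_ne[OF assms(1) assms(1), of "k - j" 0] that by auto
    then show ?thesis using assms(1) that False unfolding alt_path_def by auto
  qed simp
  then show "sw.alt_path ((follow ^^ k) x) k"
    unfolding sw.alt_path_def using reversed ends
    by (auto simp: follow'_def)
qed

lemma switch_keeps_other_path:
  assumes "alt_path x k" "alt_path x' k'" "x \<noteq> x'"
  defines "follow' \<equiv> assignment_pair.follow N (switch_p x k) (switch_q x k)"
  shows "\<And>j. j \<le> k' \<Longrightarrow> (follow' ^^ j) x' = (follow ^^ j) x'"
    and "assignment_pair.alt_path N (switch_p x k) (switch_q x k)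
           (X - {x} \<union> {(follow ^^ k) x}) (Y - {(follow ^^ k) x} \<union> {x}) x' k'"
proof -
  interpret sw: assignment_pair N "switch_p x k" "switch_q x k"
      "X - {x} \<union> {(follow ^^ k) x}" "Y - {(follow ^^ k) x} \<union> {x}"
    by (rule switch_is_assignment_pair[OF assms(1)])
  have off_path: "(follow ^^ j) x' \<notin> path_points x k \<and> (follow ^^ j) x' \<noteq> (follow ^^ k) x"
    if "j \<le> k'" for j
  proof
    show "(follow ^^ j) x' \<notin> path_points x k"
    proof
      assume "(follow ^^ j) x' \<in> path_points x k"
      then obtain i where "i < k" "(follow ^^ j) x' = (follow ^^ i) x" unfolding path_points_def by auto
      then show False using alt_path_points_ne[OF assms(1,2), of i j] assms(3) that by auto
    qed
    show "(follow ^^ j) x' \<noteq> (follow ^^ k) x"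
      using alt_path_points_ne[OF assms(1,2), of k j] assms(3) that by auto
  qed
  show same: "(follow' ^^ j) x' = (follow ^^ j) x'" if "j \<le> k'" for j
  proof (rule funpow_agree)
    fix i assume "i < j"
    then have "(follow ^^ i) x' \<in> X - path_points x k"
      using off_path[of i] assms(2) that unfolding alt_path_def by auto
    then show "follow' ((follow ^^ i) x') = follow ((follow ^^ i) x')"
      unfolding follow'_def by (rule switch_follow_outside[OF assms(1)])
  qed
  have on_path: "x \<in> path_points x k" "x \<in> X" "(follow ^^ k) x \<notin> X"
    using start_in_path_points[OF assms(1)] assms(1) unfolding alt_path_def by auto
  have same': "(sw.follow ^^ j) x' = (follow ^^ j) x'" if "j \<le> k'" for j
    using same[OF that] by (simp add: follow'_def)
  show "sw.alt_path x' k'"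
    unfolding sw.alt_path_def
  proof (intro conjI allI impI)
    show "x' \<in> X - {x} \<union> {(follow ^^ k) x} - (Y - {(follow ^^ k) x} \<union> {x})"
      using assms(2) off_path[of 0] on_path unfolding alt_path_def by auto
    show "(sw.follow ^^ k') x' \<in> Y - {(follow ^^ k) x} \<union> {x} - (X - {x} \<union> {(follow ^^ k) x})"
      unfolding same'[OF order.refl] using assms(2) off_path[of k'] on_path unfolding alt_path_def by auto
    fix j assume j: "j < k'"
    show "(sw.follow ^^ j) x' \<in> X - {x} \<union> {(follow ^^ k) x}"
      unfolding same'[OF less_imp_le[OF j]] using j assms(2) off_path[of j] on_path unfolding alt_path_def by auto
  qed
qed

lemma rejoined_iterates:
  assumes P1: "alt_path x1 k" and P2: "alt_path x2 l" and ne: "x1 \<noteq> x2" and st: "s < k" "t < l"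
    and i: "p i = (follow ^^ s) x1" and j: "p j = (follow ^^ t) x2"
    and g_other: "\<forall>c \<in> X - {p i, p j}. g c = follow c"
    and g_j: "g (p j) = (follow ^^ Suc s) x1"
  shows "\<And>m. m \<le> t \<Longrightarrow> (g ^^ m) x2 = (follow ^^ m) x2"
    and "\<And>m. m + Suc s \<le> k \<Longrightarrow> (g ^^ (m + Suc t)) x2 = (follow ^^ (m + Suc s)) x1"
proof -
  show prefix: "(g ^^ m) x2 = (follow ^^ m) x2" if "m \<le> t" for m
  proof (rule funpow_agree)
    fix n assume "n < m"
    then have "(follow ^^ n) x2 \<in> X" "(follow ^^ n) x2 \<noteq> p i" "(follow ^^ n) x2 \<noteq> p j"
      using that st P2 alt_path_points_ne[OF P1 P2, of s n] alt_path_points_ne[OF P2 P2, of n t] ne i j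
      unfolding alt_path_def by auto
    then show "g ((follow ^^ n) x2) = follow ((follow ^^ n) x2)" using g_other by blast
  qed
  show "(g ^^ (m + Suc t)) x2 = (follow ^^ (m + Suc s)) x1" if "m + Suc s \<le> k" for m
  proof -
    have "(g ^^ m) ((follow ^^ Suc s) x1) = (follow ^^ m) ((follow ^^ Suc s) x1)"
    proof (rule funpow_agree)
      fix n assume "n < m"
      then have lt: "n + Suc s < k" using that by simp
      then have "(follow ^^ (n + Suc s)) x1 \<in> X" using P1 unfolding alt_path_def by blast
      moreover have "(follow ^^ (n + Suc s)) x1 \<noteq> p i" "(follow ^^ (n + Suc s)) x1 \<noteq> p j"
        using lt st alt_path_points_ne[OF P1 P1, of "n + Suc s" s]
          alt_path_points_ne[OF P1 P2, of "n + Suc s" t] ne i j by auto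
      moreover have "(follow ^^ n) ((follow ^^ Suc s) x1) = (follow ^^ (n + Suc s)) x1"
        by (simp only: funpow_add comp_apply)
      ultimately show "g ((follow ^^ n) ((follow ^^ Suc s) x1)) = follow ((follow ^^ n) ((follow ^^ Suc s) x1))"
        using g_other by (metis insert_iff singletonD DiffI)
    qed
    moreover have "(g ^^ Suc t) x2 = (follow ^^ Suc s) x1"
      using prefix[of t] g_j j by simp
    ultimately show ?thesis by (simp only: funpow_add comp_apply)
  qed
qed

lemma rejoin_paths:
  assumes P1: "alt_path x1 k" and P2: "alt_path x2 l" and ne: "x1 \<noteq> x2" and st: "s < k" "t < l"
    and i: "i < N" "p i = (follow ^^ s) x1" and j: "j < N" "p j = (follow ^^ t) x2"
    and pair2: "assignment_pair N p2 q2 X Y"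
    and follow2: "\<And>z. z < N \<Longrightarrow> assignment_pair.follow N p2 q2 (p z) = q (transpose i j z)"
  defines "g \<equiv> assignment_pair.follow N p2 q2"
  shows "assignment_pair.alt_path N p2 q2 X Y x2 (t + (k - s))"
    and "(g ^^ (t + (k - s))) x2 = (follow ^^ k) x1"
proof -
  interpret pair2: assignment_pair N p2 q2 X Y by (rule pair2)
  have g_other: "\<forall>c \<in> X - {p i, p j}. g c = follow c"
  proof
    fix c assume c: "c \<in> X - {p i, p j}"
    obtain z where z: "z < N" "p z = c" using c by (auto elim: obtain_row)
    then have "z \<noteq> i" "z \<noteq> j" using c by auto
    then show "g c = follow c" using z follow2[of z] follow_p[OF z(1)] by (simp add: g_def)
  qed
  have "g (p j) = (follow ^^ Suc s) x1"
    using follow2[OF j(1)] follow_p[OF i(1)] i(2) by (simp add: g_def)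
  note iterates = rejoined_iterates[OF P1 P2 ne st i(2) j(2) g_other this]
  have "t + (k - s) = (k - Suc s) + Suc t" using st by simp
  then show endpoint: "(g ^^ (t + (k - s))) x2 = (follow ^^ k) x1"
    using iterates(2)[of "k - Suc s"] st by simp
  have "(g ^^ n) x2 \<in> X" if "n < t + (k - s)" for n
  proof (cases "n \<le> t")
    case True
    then show ?thesis using iterates(1)[OF True] P2 st unfolding alt_path_def by auto
  next
    case False
    define m where "m = n - Suc t"
    then have m: "n = m + Suc t" using False by simp
    then have "m + Suc s < k" using that st by simp
    then show ?thesis using iterates(2)[of m] m P1 unfolding alt_path_def by auto
  qed
  then show "pair2.alt_path x2 (t + (k - s))"
    using P1 P2 endpoint unfolding pair2.alt_path_def alt_path_def g_def by auto
qed

lemma row_exchange: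
  assumes "i < N" "j < N" and exch: "(p2 = p \<and> q2 = q \<circ> transpose i j) \<or> (p2 = p \<circ> transpose i j \<and> q2 = q)"
  shows "assignment_pair N p2 q2 X Y"
    and "\<And>z. z < N \<Longrightarrow> assignment_pair.follow N p2 q2 (p z) = q (transpose i j z)"
proof -
  have "transpose i j permutes {..<N}" using assms(1,2) by (intro permutes_swap_id) auto
  then have \<tau>: "bij_betw (transpose i j) {..<N} {..<N}" by (rule permutes_imp_bij)
  show pair2: "assignment_pair N p2 q2 X Y"
    using exch bij_betw_trans[OF \<tau> bij_p] bij_betw_trans[OF \<tau> bij_q] bij_p bij_q
    by (auto intro: assignment_pair.intro)
  fix z assume z: "z < N"
  then have tz: "transpose i j z < N" using \<tau> by (auto simp: bij_betw_def)
  from exch show "assignment_pair.follow N p2 q2 (p z) = q (transpose i j z)"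
  proof (elim disjE conjE)
    assume "p2 = p" "q2 = q \<circ> transpose i j"
    then show ?thesis using assignment_pair.follow_p[OF pair2 z] by simp
  next
    assume "p2 = p \<circ> transpose i j" "q2 = q"
    then show ?thesis using assignment_pair.follow_p[OF pair2 tz] by simp
  qed
qed

lemma reconnect:
  fixes G :: "nat \<Rightarrow> int \<Rightarrow> real"
  assumes P1: "alt_path x1 k" and P2: "alt_path x2 l" and ne: "x1 \<noteq> x2" and st: "s < k" "t < l"
    and i: "i < N" "p i = (follow ^^ s) x1" and j: "j < N" "p j = (follow ^^ t) x2"
    and gain: "G i (q i) + G j (q j) \<le> G i (q j) + G j (q i) \<or> G i (p i) + G j (p j) \<le> G i (p j) + G j (p i)"
  shows "\<exists>p' q'. assignment_pair N p' q' (X - {x2} \<union> {(follow ^^ k) x1}) (Y - {(follow ^^ k) x1} \<union> {x2})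
           \<and> pair_weight G N p q \<le> pair_weight G N p' q'"
proof -
  let ?\<tau> = "transpose i j"
  have "i \<noteq> j" using i j alt_path_points_ne[OF P1 P2, of s t] ne st by auto
  have "\<exists>p2 q2. ((p2 = p \<and> q2 = q \<circ> ?\<tau>) \<or> (p2 = p \<circ> ?\<tau> \<and> q2 = q))
                \<and> pair_weight G N p q \<le> pair_weight G N p2 q2"
    using gain
  proof (elim disjE)
    assume "G i (q i) + G j (q j) \<le> G i (q j) + G j (q i)"
    then show ?thesis using pair_weight_transpose(1)[OF i(1) j(1) \<open>i \<noteq> j\<close>, of G p q]
      by (intro exI[of _ p] exI[of _ "q \<circ> ?\<tau>"]) auto
  next
    assume "G i (p i) + G j (p j) \<le> G i (p j) + G j (p i)"
    then show ?thesis using pair_weight_transpose(2)[OF i(1) j(1) \<open>i \<noteq> j\<close>, of G p q]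
      by (intro exI[of _ "p \<circ> ?\<tau>"] exI[of _ q]) auto
  qed
  then obtain p2 q2 where exch: "(p2 = p \<and> q2 = q \<circ> ?\<tau>) \<or> (p2 = p \<circ> ?\<tau> \<and> q2 = q)"
    and le: "pair_weight G N p q \<le> pair_weight G N p2 q2" by blast
  note pair2 = row_exchange(1)[OF i(1) j(1) exch] and follow2 = row_exchange(2)[OF i(1) j(1) exch]
  interpret pair2: assignment_pair N p2 q2 X Y by (rule pair2)
  obtain p' q' where pair': "assignment_pair N p' q' (X - {x2} \<union> {(follow ^^ k) x1}) (Y - {(follow ^^ k) x1} \<union> {x2})"
      and weight': "pair_weight G N p' q' = pair_weight G N p2 q2"
    using pair2.switch_along_path[OF rejoin_paths(1)[OF P1 P2 ne st i j pair2 follow2]]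
      rejoin_paths(2)[OF P1 P2 ne st i j pair2 follow2] by metis
  show ?thesis using pair' weight' le by (intro exI[of _ p'] exI[of _ q']) simp
qed

lemma reconnect_reversed:
  fixes G :: "nat \<Rightarrow> int \<Rightarrow> real"
  assumes P1: "alt_path x1 k" and P2: "alt_path x2 l" and ne: "x1 \<noteq> x2" and st: "s < k" "t < l"
    and i: "i < N" "p i = (follow ^^ s) x1" and j: "j < N" "p j = (follow ^^ t) x2"
    and gain: "G i (q i) + G j (p j) \<le> G i (p j) + G j (q i) \<or> G i (p i) + G j (q j) \<le> G i (q j) + G j (p i)"
  shows "\<exists>p' q'. assignment_pair N p' q' (X - {x2} \<union> {(follow ^^ k) x1}) (Y - {(follow ^^ k) x1} \<union> {x2})
           \<and> pair_weight G N p q \<le> pair_weight G N p' q'"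
proof -
  let ?e1 = "(follow ^^ k) x1" and ?e2 = "(follow ^^ l) x2"
  interpret sw: assignment_pair N "switch_p x2 l" "switch_q x2 l" "X - {x2} \<union> {?e2}" "Y - {?e2} \<union> {x2}"
    by (rule switch_is_assignment_pair[OF P2])
  have R: "sw.alt_path ?e2 l" "(sw.follow ^^ (l - Suc t)) ?e2 = (follow ^^ Suc t) x2"
    using switch_reverses_path(2)[OF P2] switch_reverses_path(1)[OF P2, of "l - Suc t"] st(2)
    by (simp_all add: Suc_diff_Suc)
  have O: "sw.alt_path x1 k" "(sw.follow ^^ s) x1 = (follow ^^ s) x1" "(sw.follow ^^ k) x1 = ?e1"
    using switch_keeps_other_path(2)[OF P2 P1 ne[symmetric]] switch_keeps_other_path(1)[OF P2 P1 ne[symmetric]] st(1)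
    by simp_all
  have "p i \<notin> path_points x2 l"
  proof
    assume "p i \<in> path_points x2 l"
    then obtain n where "n < l" "p i = (follow ^^ n) x2" unfolding path_points_def by auto
    then show False using alt_path_points_ne[OF P1 P2, of s n] i(2) st ne by auto
  qed
  moreover have "p j \<in> path_points x2 l" using j(2) st(2) unfolding path_points_def by auto
  ultimately have sw_rows: "switch_p x2 l i = p i" "switch_q x2 l i = q i"
      "switch_p x2 l j = q j" "switch_q x2 l j = p j"
    by (simp_all add: switch_p_def switch_q_def)
  have "x1 \<noteq> ?e2" using P1 P2 unfolding alt_path_def by auto
  moreover have "l - Suc t < l" using st(2) by simp
  moreover have "switch_p x2 l i = (sw.follow ^^ s) x1" using sw_rows O(2) i(2) by simp
  moreover have "switch_p x2 l j = (sw.follow ^^ (l - Suc t)) ?e2"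
    using sw_rows R(2) follow_p[OF j(1)] j(2) by simp
  moreover have "G i (switch_q x2 l i) + G j (switch_q x2 l j) \<le> G i (switch_q x2 l j) + G j (switch_q x2 l i)
      \<or> G i (switch_p x2 l i) + G j (switch_p x2 l j) \<le> G i (switch_p x2 l j) + G j (switch_p x2 l i)"
    unfolding sw_rows by (rule gain)
  ultimately obtain p' q' where
      pair': "assignment_pair N p' q' (X - {x2} \<union> {?e2} - {?e2} \<union> {?e1}) (Y - {?e2} \<union> {x2} - {?e1} \<union> {?e2})"
      and le: "pair_weight G N (switch_p x2 l) (switch_q x2 l) \<le> pair_weight G N p' q'"
    using sw.reconnect[OF O(1) R(1) _ st(1) _ i(1) _ j(1)] O(3) by metis
  have "X - {x2} \<union> {?e2} - {?e2} \<union> {?e1} = X - {x2} \<union> {?e1}"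
    using P2 unfolding alt_path_def by auto
  moreover have "Y - {?e2} \<union> {x2} - {?e1} \<union> {?e2} = Y - {?e1} \<union> {x2}"
    using P1 P2 alt_path_points_ne[OF P1 P2 order.refl order.refl] ne unfolding alt_path_def by auto
  ultimately show ?thesis
    using pair' le pair_weight_switch[of G x2 l] by (intro exI[of _ p'] exI[of _ q']) simp
qed

lemma crossing_steps:
  assumes P1: "alt_path x1 k" and P2: "alt_path x2 l" and "x1 < x2" "x2 < (follow ^^ k) x1"
    and top: "\<forall>z \<in> X \<union> Y. z \<le> (follow ^^ l) x2"
  obtains s t where "s < k" "t < l"
    and "(follow ^^ s) x1 < (follow ^^ t) x2" "(follow ^^ t) x2 < (follow ^^ Suc s) x1"
    and "(follow ^^ Suc t) x2 < (follow ^^ s) x1 \<or> (follow ^^ Suc s) x1 < (follow ^^ Suc t) x2"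
proof -
  have ne: "x1 \<noteq> x2" using assms(3) by simp
  obtain s where s: "s < k" "\<forall>n\<le>s. \<not> x2 \<le> (follow ^^ n) x1" "x2 \<le> (follow ^^ Suc s) x1"
    using ex_least_nat_less[of "\<lambda>n. x2 \<le> (follow ^^ n) x1" k] assms(3,4) by auto
  let ?u = "(follow ^^ s) x1" and ?v = "(follow ^^ Suc s) x1"
  have "x2 \<noteq> ?v" using alt_path_points_ne[OF P1 P2, of "Suc s" 0] s(1) ne by auto
  then have u_x2_v: "?u < x2" "x2 < ?v" using s by auto
  have "?v \<noteq> (follow ^^ l) x2" using alt_path_points_ne[OF P1 P2, of "Suc s" l] s(1) ne by auto
  moreover have "?v \<in> X \<union> Y" using alt_path_point_in[OF P1, of "Suc s"] s(1) by simp
  \<comment> \<open>so the path from \<open>x2\<close>, which ends at the maximum, has to leave the interval \<open>(?u, ?v)\<close>\<close>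
  ultimately have "?v < (follow ^^ l) x2" using top by force
  then obtain t where t: "t < l" "\<forall>n\<le>t. ?u < (follow ^^ n) x2 \<and> (follow ^^ n) x2 < ?v"
      "\<not> (?u < (follow ^^ Suc t) x2 \<and> (follow ^^ Suc t) x2 < ?v)"
    using ex_least_nat_less[of "\<lambda>n. \<not> (?u < (follow ^^ n) x2 \<and> (follow ^^ n) x2 < ?v)" l] u_x2_v
    by auto
  have "(follow ^^ Suc t) x2 \<noteq> ?u" "(follow ^^ Suc t) x2 \<noteq> ?v"
    using alt_path_points_ne[OF P1 P2, of s "Suc t"] alt_path_points_ne[OF P1 P2, of "Suc s" "Suc t"]
      s(1) t(1) ne by auto
  then show ?thesis using that[OF s(1) t(1)] t(2,3) by fastforce
qed

lemma crossing_paths_reconnect: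
  assumes P1: "alt_path x1 k" and P2: "alt_path x2 l" and "x1 < x2" "x2 < (follow ^^ k) x1"
    and top: "\<forall>z \<in> X \<union> Y. z \<le> (follow ^^ l) x2"
  shows "\<exists>p' q'. assignment_pair N p' q' (X - {x2} \<union> {(follow ^^ k) x1}) (Y - {(follow ^^ k) x1} \<union> {x2})
           \<and> pair_weight (entry y r) N p q \<le> pair_weight (entry y r) N p' q'"
proof -
  have ne: "x1 \<noteq> x2" using assms(3) by simp
  obtain s t where st: "s < k" "t < l"
    and order: "(follow ^^ s) x1 < (follow ^^ t) x2" "(follow ^^ t) x2 < (follow ^^ Suc s) x1"
    and outside: "(follow ^^ Suc t) x2 < (follow ^^ s) x1 \<or> (follow ^^ Suc s) x1 < (follow ^^ Suc t) x2"
    using crossing_steps[OF assms] .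
  have "(follow ^^ s) x1 \<in> X" "(follow ^^ t) x2 \<in> X" using P1 P2 st unfolding alt_path_def by auto
  then obtain i j where i: "i < N" "p i = (follow ^^ s) x1" and j: "j < N" "p j = (follow ^^ t) x2"
    by (meson obtain_row)
  have q: "q i = (follow ^^ Suc s) x1" "q j = (follow ^^ Suc t) x2"
    using follow_p[OF i(1)] follow_p[OF j(1)] i(2) j(2) by simp_all
  define \<phi> where "\<phi> c = entry y r i c - entry y r j c" for c
  have "min (\<phi> (p i)) (\<phi> (q i)) \<le> max (\<phi> (p j)) (\<phi> (q j))"
    using abs_affine_diff_four_points[of "of_int (p i)" "of_int (p j)" "of_int (q i)" "of_int (q j)"
        "y i" "r i" "y j" "r j"] order outside
    unfolding \<phi>_def xvec_def i(2) j(2) q by simp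
  \<comment> \<open>exchanging the \<open>Y\<close>-columns (\<open>X\<close>-columns) of rows \<open>i\<close> and \<open>j\<close> gains
    \<open>\<phi> (q j) - \<phi> (q i)\<close> (\<open>\<phi> (p j) - \<phi> (p i)\<close>); the second case is the first one
    for the path from \<open>x2\<close> reversed\<close>
  then consider "\<phi> (q i) \<le> \<phi> (q j) \<or> \<phi> (p i) \<le> \<phi> (p j)" | "\<phi> (q i) \<le> \<phi> (p j) \<or> \<phi> (p i) \<le> \<phi> (q j)"
    by (auto simp: min_def max_def split: if_splits)
  then show ?thesis
  proof cases
    case 1
    then show ?thesis by (intro reconnect[OF P1 P2 ne st i j]) (auto simp: \<phi>_def)
  next
    case 2
    then show ?thesis by (intro reconnect_reversed[OF P1 P2 ne st i j]) (auto simp: \<phi>_def)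
  qed
qed

end

lemma Uset_add_attained:
  assumes "finite X" "card X = N" "finite Y" "card Y = N"
  obtains p q where "assignment_pair N p q X Y"
    and "Uset N y r X + Uset N y r Y = pair_weight (entry y r) N p q"
proof -
  obtain p where p: "bij_betw p {..<N} X" "Uset N y r X = (\<Sum>i<N. xvec y r (p i) i)"
    using Uset_attained[OF assms(1,2)] .
  obtain q where q: "bij_betw q {..<N} Y" "Uset N y r Y = (\<Sum>i<N. xvec y r (q i) i)"
    using Uset_attained[OF assms(3,4)] .
  show ?thesis
    using that[of p q] p q by (simp add: assignment_pair.intro pair_weight_entry)
qed

lemma finite_card_Un_pair:
  assumes "finite C" "u \<notin> C" "v \<notin> C" "u \<noteq> v"
  shows "finite (C \<union> {u, v}) \<and> card (C \<union> {u, v}) = card C + 2"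
  using assms by simp

lemma Uset_add_le_max_switch:
  assumes "finite C" "card C + 2 = N" "distinct [a, b, c, d]" "{a, b, c, d} \<inter> C = {}"
  shows "Uset N y r (C \<union> {a, c}) + Uset N y r (C \<union> {b, d})
      \<le> max (Uset N y r (C \<union> {a, b}) + Uset N y r (C \<union> {c, d}))
             (Uset N y r (C \<union> {b, c}) + Uset N y r (C \<union> {a, d}))"
proof -
  let ?X = "C \<union> {a, c}" and ?Y = "C \<union> {b, d}"
  have XY: "finite ?X" "card ?X = N" "finite ?Y" "card ?Y = N"
    using finite_card_Un_pair[of C a c] finite_card_Un_pair[of C b d] assms by auto
  obtain p q where pair: "assignment_pair N p q ?X ?Y"
    and opt: "Uset N y r ?X + Uset N y r ?Y = pair_weight (entry y r) N p q"
    by (rule Uset_add_attained[OF XY])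
  interpret assignment_pair N p q ?X ?Y by (rule pair)
  have "a \<in> ?X - ?Y" using assms(3,4) by auto
  then obtain k where P: "alt_path a k" by (rule alt_path_exists)
  have le: "Uset N y r ?X + Uset N y r ?Y
      \<le> Uset N y r (?X - {a} \<union> {(follow ^^ k) a}) + Uset N y r (?Y - {(follow ^^ k) a} \<union> {a})"
    using opt pair_weight_le_Uset_switch[OF P] by simp
  have "(follow ^^ k) a \<in> {b, d}" using P assms(3,4) unfolding alt_path_def by auto
  moreover have "?X - {a} \<union> {b} = C \<union> {b, c}" "?Y - {b} \<union> {a} = C \<union> {a, d}"
    and "?X - {a} \<union> {d} = C \<union> {c, d}" "?Y - {d} \<union> {a} = C \<union> {a, b}"
    using assms(3,4) by auto
  ultimately show ?thesis using le by auto
qed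

lemma Uset_add_le_inner_exchange:
  assumes "finite C" "card C + 2 = N" "a < b" "b < c" "c < d" "{a, b, c} \<inter> C = {}" "\<forall>z\<in>C. z < d"
  shows "Uset N y r (C \<union> {a, b}) + Uset N y r (C \<union> {c, d})
      \<le> Uset N y r (C \<union> {a, c}) + Uset N y r (C \<union> {b, d})"
proof -
  let ?X = "C \<union> {a, b}" and ?Y = "C \<union> {c, d}"
  have "d \<notin> C" using assms(7) by auto
  then have XY: "finite ?X" "card ?X = N" "finite ?Y" "card ?Y = N"
    using finite_card_Un_pair[of C a b] finite_card_Un_pair[of C c d] assms by auto
  obtain p q where pair: "assignment_pair N p q ?X ?Y"
    and opt: "Uset N y r ?X + Uset N y r ?Y = pair_weight (entry y r) N p q"
    by (rule Uset_add_attained[OF XY])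
  interpret assignment_pair N p q ?X ?Y by (rule pair)
  have targets: "?X - {b} \<union> {c} = C \<union> {a, c}" "?Y - {c} \<union> {b} = C \<union> {b, d}"
    using assms(3-6) \<open>d \<notin> C\<close> by auto
  have "b \<in> ?X - ?Y" using assms(3-6) by auto
  then obtain l where P2: "alt_path b l" by (rule alt_path_exists)
  have "(follow ^^ l) b \<in> {c, d}" using P2 assms(3-6) unfolding alt_path_def by auto
  then consider "(follow ^^ l) b = c" | "(follow ^^ l) b = d" by blast
  then show ?thesis
  proof cases
    case 1
    then show ?thesis using opt pair_weight_le_Uset_switch[OF P2] targets by simp
  next
    case 2
    have "a \<in> ?X - ?Y" using assms(3-6) by auto
    then obtain k where P1: "alt_path a k" by (rule alt_path_exists)
    have "(follow ^^ k) a \<in> {c, d}" using P1 assms(3-6) unfolding alt_path_def by auto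
    moreover have "(follow ^^ k) a \<noteq> (follow ^^ l) b"
      using alt_path_points_ne[OF P1 P2 order.refl order.refl] assms(3) by simp
    ultimately have ec: "(follow ^^ k) a = c" using 2 by auto
    have "\<forall>z \<in> ?X \<union> ?Y. z \<le> (follow ^^ l) b" using 2 assms(3-5,7) by fastforce
    then have "\<exists>p' q'. assignment_pair N p' q' (?X - {b} \<union> {c}) (?Y - {c} \<union> {b})
        \<and> pair_weight (entry y r) N p q \<le> pair_weight (entry y r) N p' q'"
      using crossing_paths_reconnect[OF P1 P2 assms(3), of y r] assms(4) unfolding ec by blast
    then obtain p' q' where pair': "assignment_pair N p' q' (C \<union> {a, c}) (C \<union> {b, d})"
        and "pair_weight (entry y r) N p q \<le> pair_weight (entry y r) N p' q'"
      unfolding targets by blast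
    then show ?thesis using opt assignment_pair.pair_weight_le_Uset[OF pair', of y r] by simp
  qed
qed

lemma Uset_add_le_outer_exchange:
  assumes "finite C" "card C + 2 = N" "a < b" "b < c" "c < d" "{a, b, c} \<inter> C = {}" "\<forall>z\<in>C. z < d"
  shows "Uset N y r (C \<union> {b, c}) + Uset N y r (C \<union> {a, d})
      \<le> Uset N y r (C \<union> {a, c}) + Uset N y r (C \<union> {b, d})"
proof -
  let ?X = "C \<union> {a, d}" and ?Y = "C \<union> {b, c}"
  have "d \<notin> C" using assms(7) by auto
  then have XY: "finite ?X" "card ?X = N" "finite ?Y" "card ?Y = N"
    using finite_card_Un_pair[of C a d] finite_card_Un_pair[of C b c] assms by auto
  obtain p q where pair: "assignment_pair N p q ?X ?Y"
    and opt: "Uset N y r ?X + Uset N y r ?Y = pair_weight (entry y r) N p q"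
    by (rule Uset_add_attained[OF XY])
  interpret assignment_pair N p q ?X ?Y by (rule pair)
  have "a \<in> ?X - ?Y" using assms(3-6) by auto
  then obtain k where P1: "alt_path a k" by (rule alt_path_exists)
  have "(follow ^^ k) a \<in> {b, c}" using P1 assms(3-6) \<open>d \<notin> C\<close> unfolding alt_path_def by auto
  then consider "(follow ^^ k) a = b" | "(follow ^^ k) a = c" by blast
  then show ?thesis
  proof cases
    case 1
    moreover have "?X - {a} \<union> {b} = C \<union> {b, d}" "?Y - {b} \<union> {a} = C \<union> {a, c}"
      using assms(3-6) \<open>d \<notin> C\<close> by auto
    ultimately have "pair_weight (entry y r) N p q \<le> Uset N y r (C \<union> {b, d}) + Uset N y r (C \<union> {a, c})"
      using pair_weight_le_Uset_switch[OF P1, of y r] by simp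
    then show ?thesis using opt by linarith
  next
    case 2
    \<comment> \<open>then the path from \<open>d\<close> ends at \<open>b\<close>; switching it leads to the configuration of the inner exchange\<close>
    have "d \<in> ?X - ?Y" using assms(3-6) \<open>d \<notin> C\<close> by auto
    then obtain l where P2: "alt_path d l" by (rule alt_path_exists)
    have "(follow ^^ l) d \<in> {b, c}" using P2 assms(3-6) unfolding alt_path_def by auto
    moreover have "(follow ^^ k) a \<noteq> (follow ^^ l) d"
      using alt_path_points_ne[OF P1 P2 order.refl order.refl] assms(3-5) by simp
    ultimately have "(follow ^^ l) d = b" using 2 by auto
    moreover have "?X - {d} \<union> {b} = C \<union> {a, b}" "?Y - {b} \<union> {d} = C \<union> {c, d}"
      using assms(3-6) \<open>d \<notin> C\<close> by auto
    ultimately have "pair_weight (entry y r) N p q \<le> Uset N y r (C \<union> {a, b}) + Uset N y r (C \<union> {c, d})"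
      using pair_weight_le_Uset_switch[OF P2, of y r] by simp
    then show ?thesis using opt Uset_add_le_inner_exchange[OF assms, of y r] by linarith
  qed
qed

theorem Uset_pluecker:
  assumes "finite C" "card C + 2 = N" "a < b" "b < c" "c < d" "{a, b, c} \<inter> C = {}" "\<forall>z\<in>C. z < d"
  shows "Uset N y r (C \<union> {a, c}) + Uset N y r (C \<union> {b, d})
       = max (Uset N y r (C \<union> {a, b}) + Uset N y r (C \<union> {c, d}))
             (Uset N y r (C \<union> {b, c}) + Uset N y r (C \<union> {a, d}))"
    (is "?lhs = max ?A ?B")
proof (rule antisym)
  have "distinct [a, b, c, d]" "{a, b, c, d} \<inter> C = {}" using assms(3-7) by auto
  then show "?lhs \<le> max ?A ?B"
    by (rule Uset_add_le_max_switch[OF assms(1,2)])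
  show "max ?A ?B \<le> ?lhs"
    using Uset_add_le_inner_exchange[OF assms] Uset_add_le_outer_exchange[OF assms] by simp
qed

theorem theorem1:
  fixes N :: nat and y r :: "nat \<Rightarrow> real" and k1 k2 k3 :: int
  assumes "N \<ge> 2"
    and "1 \<le> k1" and "k1 < k2" and "k2 < k3" and "k3 \<le> int N + 1"
  shows "Uset N y r ({1..int N + 1} - {k2}) + Uset N y r ({1..int N + 2} - {k1, k3})
       = max (Uset N y r ({1..int N + 1} - {k3}) + Uset N y r ({1..int N + 2} - {k1, k2}))
             (Uset N y r ({1..int N + 1} - {k1}) + Uset N y r ({1..int N + 2} - {k2, k3}))"
proof -
  define C where "C = {1..int N + 1} - {k1, k2, k3}"
  have "card C = card {1..int N + 1} - card {k1, k2, k3}"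
    unfolding C_def using assms by (intro card_Diff_subset) auto
  then have "card C + 2 = N" using assms by simp
  moreover have "{1..int N + 1} - {k2} = C \<union> {k1, k3}" "{1..int N + 2} - {k1, k3} = C \<union> {k2, int N + 2}"
    "{1..int N + 1} - {k3} = C \<union> {k1, k2}" "{1..int N + 2} - {k1, k2} = C \<union> {k3, int N + 2}"
    "{1..int N + 1} - {k1} = C \<union> {k2, k3}" "{1..int N + 2} - {k2, k3} = C \<union> {k1, int N + 2}"
    unfolding C_def using assms by auto
  moreover have "finite C" "{k1, k2, k3} \<inter> C = {}" "\<forall>z\<in>C. z < int N + 2"
    unfolding C_def by auto
  ultimately show ?thesis using Uset_pluecker[of C N k1 k2 k3 "int N + 2" y r] assms by simp
qed

end
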